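(* Let $(X,\mathfrak{m})$ be a measurable space with $\mathfrak{m}$ an infinite $\sigma$-algebra containing every finite subset of $X$, and let $X^*=\mathfrak{m}^\beta\setminus e(X)$. Then every nonempty $G_\delta$-subset of $X^*$ has nonempty interior in $X^*$.
   Context: An $\mathfrak{m}$-filter is a family $p\subseteq\mathfrak{m}$ with $\emptyset\notin p$, $X\in p$, closed under supersets belonging to $\mathfrak{m}$ and under finite intersections; an $\mathfrak{m}$-ultrafilter is a maximal $\mathfrak{m}$-filter; $\mathfrak{m}^\beta$ is the set of all $\mathfrak{m}$-ultrafilters, topologized by the base $\{\widehat{A}:A\in\mathfrak{m}\}$ where $\widehat{A}=\{p\in\mathfrak{m}^\beta:A\in p\}$. The map $e:X\to\mathfrak{m}^\beta$ is $e(x)=\{A\in\mathfrak{m}:x\in A\}$. $X^*$ carries the subspace topology. *)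

theory Defs
  imports "HOL-Analysis.Analysis"
begin

definition m_filter :: "'a set \<Rightarrow> 'a set set \<Rightarrow> 'a set set \<Rightarrow> bool" where
  "m_filter X m p \<longleftrightarrow> p \<subseteq> m \<and> {} \<notin> p \<and> X \<in> p \<and>
     (\<forall>A\<in>p. \<forall>B\<in>m. A \<subseteq> B \<longrightarrow> B \<in> p) \<and>
     (\<forall>A\<in>p. \<forall>B\<in>p. A \<inter> B \<in> p)"

definition m_ultrafilter :: "'a set \<Rightarrow> 'a set set \<Rightarrow> 'a set set \<Rightarrow> bool" where
  "m_ultrafilter X m p \<longleftrightarrow> m_filter X m p \<and> (\<forall>q. m_filter X m q \<and> p \<subseteq> q \<longrightarrow> q = p)"

definition m_beta :: "'a set \<Rightarrow> 'a set set \<Rightarrow> 'a set set set" where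
  "m_beta X m = {p. m_ultrafilter X m p}"

definition m_hat :: "'a set \<Rightarrow> 'a set set \<Rightarrow> 'a set \<Rightarrow> 'a set set set" where
  "m_hat X m A = {p \<in> m_beta X m. A \<in> p}"

definition m_beta_top :: "'a set \<Rightarrow> 'a set set \<Rightarrow> 'a set set topology" where
  "m_beta_top X m = topology_generated_by {m_hat X m A | A. A \<in> m}"

definition m_e :: "'a set \<Rightarrow> 'a set set \<Rightarrow> 'a \<Rightarrow> 'a set set" where
  "m_e X m x = {A \<in> m. x \<in> A}"

definition m_star :: "'a set \<Rightarrow> 'a set set \<Rightarrow> 'a set set set" where
  "m_star X m = m_beta X m - m_e X m ` X"

end

theory Submission
  imports Defs
begin

text \<open>Points of \<open>X\<^sup>*\<close> are the free \<open>\<mathfrak>m\<close>-ultrafilters, and all their members are infinite.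
Given \<open>p\<close> in a \<open>G\<^sub>\<delta>\<close>-set \<open>G = \<Inter>\<^sub>n U\<^sub>n\<close>, choose basic neighbourhoods \<open>m_hat A\<^sub>n \<inter> X\<^sup>* \<subseteq> U\<^sub>n\<close>
with \<open>A\<^sub>n \<in> p\<close>. Since each \<open>A\<^sub>0 \<inter> \<dots> \<inter> A\<^sub>n\<close> is infinite, a diagonal choice yields a countable,
hence measurable, infinite set \<open>B\<close> with every \<open>B - A\<^sub>n\<close> finite. A free ultrafilter containing \<open>B\<close>
then contains every \<open>A\<^sub>n\<close>, so the open set \<open>m_hat B \<inter> X\<^sup>*\<close> lies in \<open>G\<close>; it is nonempty because
the sets of \<open>\<mathfrak>m\<close> containing all but finitely many points of \<open>B\<close> form a free filter.\<close>

lemma m_filter_Int: "m_filter X m p \<Longrightarrow> A \<in> p \<Longrightarrow> B \<in> p \<Longrightarrow> A \<inter> B \<in> p"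
  unfolding m_filter_def by blast

lemma m_filter_mono: "m_filter X m p \<Longrightarrow> A \<in> p \<Longrightarrow> B \<in> m \<Longrightarrow> A \<subseteq> B \<Longrightarrow> B \<in> p"
  unfolding m_filter_def by blast

lemma m_filter_sets: "m_filter X m p \<Longrightarrow> A \<in> p \<Longrightarrow> A \<in> m"
  unfolding m_filter_def by blast

lemma m_filter_nonempty: "m_filter X m p \<Longrightarrow> A \<in> p \<Longrightarrow> A \<noteq> {}"
  unfolding m_filter_def by blast

lemma m_filter_Inter:
  assumes "m_filter X m p" "finite F" "F \<noteq> {}" "F \<subseteq> p"
  shows "\<Inter>F \<in> p"
  using assms(2-4)
  by (induction F rule: finite_ne_induct) (auto intro: m_filter_Int[OF assms(1)])

lemma m_filter_mem_subset:
  assumes "algebra X m" "m_filter X m p" "A \<in> p"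
  shows "A \<subseteq> X"
proof -
  interpret algebra X m by fact
  show ?thesis
    using m_filter_sets[OF assms(2,3)] sets_into_space by blast
qed

lemma m_ultrafilter_imp_m_filter: "m_ultrafilter X m p \<Longrightarrow> m_filter X m p"
  unfolding m_ultrafilter_def by blast

lemma m_star_imp_m_ultrafilter: "p \<in> m_star X m \<Longrightarrow> m_ultrafilter X m p"
  unfolding m_star_def m_beta_def by blast

lemma m_ultrafilter_mem_or_compl:
  assumes "algebra X m" "m_ultrafilter X m p" "A \<in> m"
  shows "A \<in> p \<or> X - A \<in> p"
proof -
  interpret algebra X m by fact
  have p: "m_filter X m p"
    using assms(2) by (rule m_ultrafilter_imp_m_filter)
  show ?thesis
  proof (cases "\<exists>P\<in>p. P \<inter> A = {}")
    case True
    then obtain P where "P \<in> p" "P \<subseteq> X - A"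
      using m_filter_mem_subset[OF assms(1) p] by blast
    then show ?thesis
      using m_filter_mono[OF p] assms(3) by blast
  next
    case False
    define q where "q = {C \<in> m. \<exists>P\<in>p. P \<inter> A \<subseteq> C}"
    have "m_filter X m q"
      unfolding m_filter_def
    proof (intro conjI ballI impI)
      show "q \<subseteq> m" "{} \<notin> q" "X \<in> q"
        using False p unfolding q_def m_filter_def by auto
    next
      fix C D assume "C \<in> q" "D \<in> m" "C \<subseteq> D"
      then show "D \<in> q"
        unfolding q_def by blast
    next
      fix C D assume "C \<in> q" "D \<in> q"
      then obtain P Q where "P \<in> p" "Q \<in> p" "P \<inter> A \<subseteq> C" "Q \<inter> A \<subseteq> D" "C \<in> m" "D \<in> m"
        unfolding q_def by blast
      then show "C \<inter> D \<in> q"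
        unfolding q_def using m_filter_Int[OF p, of P Q] by blast
    qed
    moreover have "p \<subseteq> q"
      unfolding q_def using m_filter_sets[OF p] by blast
    ultimately have "q = p"
      using assms(2) unfolding m_ultrafilter_def by blast
    moreover have "A \<in> q"
      unfolding q_def using assms(3) p unfolding m_filter_def by blast
    ultimately show ?thesis
      by blast
  qed
qed

lemma m_filter_Union_chain:
  assumes "\<C> \<noteq> {}" "subset.chain {q. m_filter X m q} \<C>"
  shows "m_filter X m (\<Union>\<C>)"
proof -
  have filters: "\<And>c. c \<in> \<C> \<Longrightarrow> m_filter X m c"
    and linear: "\<And>c d. c \<in> \<C> \<Longrightarrow> d \<in> \<C> \<Longrightarrow> c \<subseteq> d \<or> d \<subseteq> c"
    using assms(2) unfolding subset_chain_def by blast+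
  show ?thesis
    unfolding m_filter_def
  proof (intro conjI ballI impI)
    show "\<Union>\<C> \<subseteq> m" "{} \<notin> \<Union>\<C>"
      using filters unfolding m_filter_def by blast+
    show "X \<in> \<Union>\<C>"
      using assms(1) filters unfolding m_filter_def by blast
  next
    fix A B assume "A \<in> \<Union>\<C>" "B \<in> m" "A \<subseteq> B"
    then show "B \<in> \<Union>\<C>"
      using filters m_filter_mono by blast
  next
    fix A B assume "A \<in> \<Union>\<C>" "B \<in> \<Union>\<C>"
    then obtain c d where "c \<in> \<C>" "d \<in> \<C>" "A \<in> c" "B \<in> d"
      by blast
    then show "A \<inter> B \<in> \<Union>\<C>"
      using linear[of c d] filters m_filter_Int by blast
  qed
qed

lemma m_filter_extends_to_m_ultrafilter:
  assumes "m_filter X m F"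
  obtains p where "m_ultrafilter X m p" "F \<subseteq> p"
proof -
  let ?\<A> = "{q. m_filter X m q \<and> F \<subseteq> q}"
  have "\<exists>M\<in>?\<A>. \<forall>q\<in>?\<A>. M \<subseteq> q \<longrightarrow> q = M"
  proof (rule subset_Zorn_nonempty)
    show "?\<A> \<noteq> {}"
      using assms by blast
  next
    fix \<C> assume \<C>: "\<C> \<noteq> {}" "subset.chain ?\<A> \<C>"
    then have "subset.chain {q. m_filter X m q} \<C>"
      unfolding subset_chain_def by blast
    then have "m_filter X m (\<Union>\<C>)"
      using \<C>(1) m_filter_Union_chain by blast
    moreover have "F \<subseteq> \<Union>\<C>"
      using \<C> unfolding subset_chain_def by blast
    ultimately show "\<Union>\<C> \<in> ?\<A>"
      by blast
  qed
  then obtain M where M: "m_filter X m M" "F \<subseteq> M" and max: "\<forall>q\<in>?\<A>. M \<subseteq> q \<longrightarrow> q = M"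
    by blast
  have "m_ultrafilter X m M"
    unfolding m_ultrafilter_def using M max by blast
  then show thesis
    using M(2) by (rule that)
qed

lemma m_star_iff_cofinite:
  assumes "algebra X m" "\<And>x. x \<in> X \<Longrightarrow> {x} \<in> m" "m_ultrafilter X m p"
  shows "p \<in> m_star X m \<longleftrightarrow> (\<forall>x\<in>X. X - {x} \<in> p)"
proof
  assume p_star: "p \<in> m_star X m"
  have p: "m_filter X m p"
    using assms(3) by (rule m_ultrafilter_imp_m_filter)
  show "\<forall>x\<in>X. X - {x} \<in> p"
  proof (rule ballI, rule ccontr)
    fix x assume x: "x \<in> X" "X - {x} \<notin> p"
    have "X - {x} \<in> m"
      using assms(1,2) x(1) by (simp add: algebra.compl_sets)
    then have "X - (X - {x}) \<in> p"
      using m_ultrafilter_mem_or_compl[OF assms(1,3)] x(2) by blast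
    moreover have "X - (X - {x}) = {x}"
      using x(1) by blast
    ultimately have x_in: "{x} \<in> p"
      by simp
    have "p = m_e X m x"
    proof
      show "p \<subseteq> m_e X m x"
        unfolding m_e_def
        using m_filter_Int[OF p _ x_in] m_filter_nonempty[OF p] m_filter_sets[OF p] by blast
      show "m_e X m x \<subseteq> p"
        unfolding m_e_def using m_filter_mono[OF p x_in] by blast
    qed
    then show False
      using p_star x(1) unfolding m_star_def by blast
  qed
next
  assume "\<forall>x\<in>X. X - {x} \<in> p"
  then have "p \<notin> m_e X m ` X"
    unfolding m_e_def by blast
  then show "p \<in> m_star X m"
    using assms(3) unfolding m_star_def m_beta_def by blast
qed

lemma m_star_mem_infinite:
  assumes "algebra X m" "\<And>x. x \<in> X \<Longrightarrow> {x} \<in> m" "p \<in> m_star X m" "A \<in> p"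
  shows "infinite A"
proof
  assume "finite A"
  have p: "m_filter X m p"
    using assms(3) by (intro m_ultrafilter_imp_m_filter m_star_imp_m_ultrafilter)
  have "A \<subseteq> X"
    by (rule m_filter_mem_subset[OF assms(1) p assms(4)])
  then have "insert A ((\<lambda>x. X - {x}) ` A) \<subseteq> p"
    using assms m_star_iff_cofinite m_star_imp_m_ultrafilter by blast
  then have "\<Inter>(insert A ((\<lambda>x. X - {x}) ` A)) \<in> p"
    using \<open>finite A\<close> by (intro m_filter_Inter[OF p]) auto
  moreover have "\<Inter>(insert A ((\<lambda>x. X - {x}) ` A)) = {}"
    by blast
  ultimately show False
    using m_filter_nonempty[OF p] by blast
qed

lemma m_star_mem_if_finite_diff:
  assumes "algebra X m" "\<And>x. x \<in> X \<Longrightarrow> {x} \<in> m" "p \<in> m_star X m"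
    and "B \<in> p" "D \<in> m" "finite (B - D)"
  shows "D \<in> p"
proof (rule ccontr)
  assume "D \<notin> p"
  have p: "m_filter X m p"
    using assms(3) by (intro m_ultrafilter_imp_m_filter m_star_imp_m_ultrafilter)
  have "X - D \<in> p"
    using m_ultrafilter_mem_or_compl[OF assms(1) m_star_imp_m_ultrafilter[OF assms(3)] assms(5)]
      \<open>D \<notin> p\<close> by blast
  then have "B \<inter> (X - D) \<in> p"
    using m_filter_Int[OF p assms(4)] by blast
  moreover have "B \<inter> (X - D) = B - D"
    using m_filter_mem_subset[OF assms(1) p assms(4)] by blast
  ultimately show False
    using m_star_mem_infinite[OF assms(1-3)] assms(6) by simp
qed

lemma m_star_ex_mem:
  assumes "algebra X m" "\<And>x. x \<in> X \<Longrightarrow> {x} \<in> m" "B \<in> m" "infinite B"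
  obtains q where "q \<in> m_star X m" "B \<in> q"
proof -
  interpret algebra X m by fact
  define F where "F = {C \<in> m. finite (B - C)}"
  have B_sub: "B \<subseteq> X"
    using assms(3) sets_into_space by blast
  have "m_filter X m F"
    unfolding m_filter_def
  proof (intro conjI ballI impI)
    show "F \<subseteq> m" "{} \<notin> F"
      unfolding F_def using assms(4) by auto
    have "finite (B - X)"
      using B_sub by (metis Diff_eq_empty_iff finite.emptyI)
    then show "X \<in> F"
      unfolding F_def by simp
  next
    fix C D assume "C \<in> F" "D \<in> m" "C \<subseteq> D"
    moreover have "B - D \<subseteq> B - C"
      using \<open>C \<subseteq> D\<close> by blast
    ultimately show "D \<in> F"
      unfolding F_def using finite_subset by blast
  next
    fix C D assume "C \<in> F" "D \<in> F"
    moreover have "B - C \<inter> D = (B - C) \<union> (B - D)"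
      by blast
    ultimately show "C \<inter> D \<in> F"
      unfolding F_def by (simp add: Int)
  qed
  then obtain q where q: "m_ultrafilter X m q" "F \<subseteq> q"
    by (rule m_filter_extends_to_m_ultrafilter)
  have "X - {x} \<in> F" if "x \<in> X" for x
  proof -
    have "finite (B - (X - {x}))"
      using B_sub by (auto intro!: finite_subset[of _ "{x}"])
    then show ?thesis
      unfolding F_def using assms(2) that by (simp add: compl_sets)
  qed
  then have "q \<in> m_star X m"
    using m_star_iff_cofinite[OF assms(1,2) q(1)] q(2) by blast
  moreover have "B \<in> F"
    unfolding F_def using assms(3) by simp
  ultimately show thesis
    using q(2) that by blast
qed

lemma inj_choice_from_infinite_sets:
  fixes D :: "nat \<Rightarrow> 'a set"
  assumes "\<And>n. infinite (D n)"
  obtains y where "inj y" "\<And>n. y n \<in> D n"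
proof -
  define next_point where "next_point n S = (SOME z. z \<in> D n \<and> z \<notin> S)" for n S
  define S where "S = rec_nat {} (\<lambda>n T. insert (next_point n T) T)"
  define y where "y n = next_point n (S n)" for n
  have S_simps: "S 0 = {}" "S (Suc n) = insert (y n) (S n)" for n
    unfolding S_def y_def by simp_all
  have S_eq: "S n = y ` {..<n}" for n
    by (induction n) (simp_all add: S_simps lessThan_Suc)
  have "y n \<in> D n \<and> y n \<notin> S n" for n
  proof -
    have "\<exists>z. z \<in> D n \<and> z \<notin> S n"
      using assms[of n] finite_subset[of "D n" "S n"] by (auto simp: S_eq)
    then show ?thesis
      unfolding y_def next_point_def by (rule someI_ex)
  qed
  then have y: "y n \<in> D n" "y n \<notin> y ` {..<n}" for n
    by (simp_all add: S_eq)
  have "inj y"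
  proof (rule injI)
    fix i j assume "y i = y j"
    then show "i = j"
      using y(2)[of i] y(2)[of j] by (metis lessThan_iff linorder_neqE_nat rev_image_eqI)
  qed
  then show thesis
    using y(1) by (rule that)
qed

lemma m_star_pseudo_intersection:
  assumes "sigma_algebra X m" "\<And>x. x \<in> X \<Longrightarrow> {x} \<in> m" "p \<in> m_star X m"
    and "\<And>n::nat. A n \<in> p"
  obtains B where "B \<in> m" "infinite B" "\<And>n. finite (B - A n)"
proof -
  interpret sigma_algebra X m by fact
  have p: "m_filter X m p"
    using assms(3) by (intro m_ultrafilter_imp_m_filter m_star_imp_m_ultrafilter)
  define D where "D n = \<Inter>(A ` {..n})" for n
  have D_mem: "D n \<in> p" for n
    unfolding D_def using assms(4) by (intro m_filter_Inter[OF p]) auto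
  have D_infinite: "infinite (D n)" for n
    using m_star_mem_infinite[OF algebra_axioms assms(2,3) D_mem] .
  obtain y where y: "inj y" "\<And>n. y n \<in> D n"
    using inj_choice_from_infinite_sets[of D] D_infinite by metis
  have "range y \<subseteq> X"
    using y(2) m_filter_mem_subset[OF algebra_axioms p D_mem] by auto
  then have "range y \<in> m"
    using assms(2) by (auto intro!: countable[of "range y"])
  moreover have "infinite (range y)"
    using y(1) by (rule range_inj_infinite)
  moreover have "finite (range y - A n)" for n
  proof (rule finite_subset)
    show "range y - A n \<subseteq> y ` {..<n}"
    proof
      fix z assume "z \<in> range y - A n"
      then obtain k where k: "z = y k" "y k \<notin> A n"
        by blast
      have "n \<le> k \<Longrightarrow> y k \<in> A n"
        using y(2)[of k] unfolding D_def by blast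
      then show "z \<in> y ` {..<n}"
        using k by (metis imageI lessThan_iff not_le)
    qed
  qed simp
  ultimately show thesis
    by (rule that)
qed

lemma m_hat_Int:
  assumes "A \<in> m" "B \<in> m"
  shows "m_hat X m (A \<inter> B) = m_hat X m A \<inter> m_hat X m B"
proof -
  have "A \<inter> B \<in> p \<longleftrightarrow> A \<in> p \<and> B \<in> p" if "m_filter X m p" for p
    using that assms m_filter_Int[OF that] m_filter_mono[OF that, of "A \<inter> B"] by blast
  then show ?thesis
    unfolding m_hat_def m_beta_def using m_ultrafilter_imp_m_filter by blast
qed

lemma openin_m_beta_top_m_hat: "A \<in> m \<Longrightarrow> openin (m_beta_top X m) (m_hat X m A)"
  unfolding m_beta_top_def openin_topology_generated_by_iff
  by (blast intro: generate_topology_on.Basis)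

lemma m_beta_top_open_base:
  assumes "openin (m_beta_top X m) U" "p \<in> U"
  obtains A where "A \<in> m" "A \<in> p" "m_hat X m A \<subseteq> U"
proof -
  have "generate_topology_on {m_hat X m A | A. A \<in> m} U"
    using assms(1) unfolding m_beta_top_def openin_topology_generated_by_iff .
  then have "\<exists>A\<in>m. p \<in> m_hat X m A \<and> m_hat X m A \<subseteq> U"
    using assms(2)
  proof (induction arbitrary: p rule: generate_topology_on.induct)
    case (Int U V)
    then obtain A B where A: "A \<in> m" "p \<in> m_hat X m A" "m_hat X m A \<subseteq> U"
      and B: "B \<in> m" "p \<in> m_hat X m B" "m_hat X m B \<subseteq> V"
      by blast
    then have "p \<in> m_hat X m (A \<inter> B)"
      using m_hat_Int[OF A(1) B(1)] by blast
    moreover from this have "A \<inter> B \<in> m"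
      unfolding m_hat_def m_beta_def using m_filter_sets m_ultrafilter_imp_m_filter by blast
    moreover have "m_hat X m (A \<inter> B) \<subseteq> U \<inter> V"
      using m_hat_Int[OF A(1) B(1)] A(3) B(3) by blast
    ultimately show ?case
      by blast
  qed blast+
  then show thesis
    using that unfolding m_hat_def by blast
qed

lemma m_star_open_base:
  assumes "openin (subtopology (m_beta_top X m) (m_star X m)) U" "p \<in> U"
  obtains A where "A \<in> m" "A \<in> p" "m_hat X m A \<inter> m_star X m \<subseteq> U"
proof -
  obtain V where "openin (m_beta_top X m) V" "U = V \<inter> m_star X m"
    using assms(1) unfolding openin_subtopology by blast
  with assms(2) that show thesis
    by (meson IntD1 Int_mono m_beta_top_open_base order_refl subset_trans)
qed

lemma gdelta_in_eq_Inter_range: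
  assumes "gdelta_in T G"
  obtains U :: "nat \<Rightarrow> 'a set" where "\<forall>n. openin T (U n)" "G = \<Inter>(range U)"
proof -
  obtain \<U> where \<U>: "countable \<U>" "\<And>U. U \<in> \<U> \<Longrightarrow> openin T U" "G = \<Inter>\<U>"
    using assms unfolding gdelta_in_alt intersection_of_def by blast
  \<comment> \<open>Adjoining the whole space makes the family nonempty, hence the range of a sequence.\<close>
  define U where "U = from_nat_into (insert (topspace T) \<U>)"
  have U_range: "range U = insert (topspace T) \<U>"
    unfolding U_def using \<U>(1) by (simp add: range_from_nat_into)
  then have "\<forall>n. openin T (U n)"
    using \<U>(2) by (metis insertE openin_topspace rangeI)
  moreover have "G = \<Inter>(range U)"
    using U_range \<U>(3) gdelta_in_subset[OF assms] by auto
  ultimately show thesis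
    by (rule that)
qed

lemma m_star_gdelta_contains_m_hat:
  assumes "sigma_algebra X m" "\<And>x. x \<in> X \<Longrightarrow> {x} \<in> m"
    and "gdelta_in (subtopology (m_beta_top X m) (m_star X m)) G" "p \<in> G"
  obtains B where "B \<in> m" "infinite B" "m_hat X m B \<inter> m_star X m \<subseteq> G"
proof -
  interpret sigma_algebra X m by fact
  obtain U :: "nat \<Rightarrow> _" where U: "\<forall>n. openin (subtopology (m_beta_top X m) (m_star X m)) (U n)"
    and G_eq: "G = \<Inter>(range U)"
    using assms(3) by (rule gdelta_in_eq_Inter_range)
  have "\<exists>A. A \<in> m \<and> A \<in> p \<and> m_hat X m A \<inter> m_star X m \<subseteq> U n" for n
  proof -
    have "p \<in> U n"
      using assms(4) G_eq by blast
    then show ?thesis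
      using m_star_open_base[of X m "U n" p] U by metis
  qed
  then obtain A where A: "\<And>n. A n \<in> m" "\<And>n. A n \<in> p"
    "\<And>n. m_hat X m (A n) \<inter> m_star X m \<subseteq> U n"
    by metis
  have p: "p \<in> m_star X m"
    using gdelta_in_subset[OF assms(3)] assms(4) by auto
  obtain B where B: "B \<in> m" "infinite B" "\<And>n. finite (B - A n)"
    using m_star_pseudo_intersection[OF assms(1,2) p, of A] A(2) by blast
  have "m_hat X m B \<inter> m_star X m \<subseteq> U n" for n
  proof
    fix q assume q: "q \<in> m_hat X m B \<inter> m_star X m"
    then have "A n \<in> q"
      using m_star_mem_if_finite_diff[OF algebra_axioms assms(2), of q B "A n"] A(1) B(3)
      unfolding m_hat_def by blast
    then show "q \<in> U n"
      using q A(3)[of n] unfolding m_hat_def by blast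
  qed
  then show thesis
    using that B(1,2) G_eq by blast
qed

theorem theorem3p2:
  fixes X :: "'a set" and m :: "'a set set"
  assumes "sigma_algebra X m"
    and "infinite m"
    and "\<forall>F. F \<subseteq> X \<and> finite F \<longrightarrow> F \<in> m"
    and "G \<noteq> {}"
    and "gdelta_in (subtopology (m_beta_top X m) (m_star X m)) G"
  shows "(subtopology (m_beta_top X m) (m_star X m)) interior_of G \<noteq> {}"
proof -
  interpret sigma_algebra X m by fact
  have singletons: "\<And>x. x \<in> X \<Longrightarrow> {x} \<in> m"
    using assms(3) by simp
  obtain p where "p \<in> G"
    using assms(4) by blast
  then obtain B where B: "B \<in> m" "infinite B" "m_hat X m B \<inter> m_star X m \<subseteq> G"
    using m_star_gdelta_contains_m_hat[OF assms(1) singletons assms(5)] by blast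
  obtain q where "q \<in> m_star X m" "B \<in> q"
    using m_star_ex_mem[OF algebra_axioms singletons B(1,2)] by blast
  then have "q \<in> m_hat X m B \<inter> m_star X m"
    unfolding m_hat_def m_star_def by blast
  moreover have "openin (subtopology (m_beta_top X m) (m_star X m)) (m_hat X m B \<inter> m_star X m)"
    unfolding openin_subtopology using openin_m_beta_top_m_hat[OF B(1)] by blast
  ultimately show ?thesis
    using interior_of_maximal[OF B(3)] by blast
qed

end
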